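(* (i) The cyclic Kautz digraph $CK(3,\ell)$ with $\ell\ge 3$, $\ell\neq 4$, has diameter $2\ell-1$, and for every $d\ge 3$ the cyclic Kautz digraph $CK(d,3)$ has diameter $2\cdot 3-1=5$. (ii) The cyclic Kautz digraph $CK(3,4)$ has diameter $6$.
   Context: The cyclic Kautz digraph $CK(d,\ell)$ has vertex set $\{x_1\ldots x_\ell\in\mathbb Z_{d+1}^\ell : x_i\neq x_{i+1}\ (1\le i\le \ell-1),\ x_\ell\neq x_1\}$ and arcs $x_1x_2\ldots x_\ell\to x_2\ldots x_\ell y$ for every $y\in\mathbb Z_{d+1}$ with $y\neq x_2,x_\ell$. The diameter is the maximum directed distance between ordered pairs of vertices. *)

theory Defs
  imports Main "HOL-Library.Extended_Nat"
begin

definition ck_vertices :: "nat \<Rightarrow> nat \<Rightarrow> nat list set" where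
  "ck_vertices d l = {xs. length xs = l \<and> set xs \<subseteq> {0..d}
      \<and> (\<forall>i. Suc i < l \<longrightarrow> xs ! i \<noteq> xs ! Suc i)
      \<and> last xs \<noteq> hd xs}"

definition ck_arcs :: "nat \<Rightarrow> nat \<Rightarrow> (nat list \<times> nat list) set" where
  "ck_arcs d l = {(xs, tl xs @ [y]) | xs y. xs \<in> ck_vertices d l \<and> y \<le> d
      \<and> y \<noteq> xs ! 1 \<and> y \<noteq> last xs}"

text \<open>Directed distance (\<infinity> if unreachable): least number of arcs of a directed walk.\<close>
definition ck_dist :: "nat \<Rightarrow> nat \<Rightarrow> nat list \<Rightarrow> nat list \<Rightarrow> enat" where
  "ck_dist d l u v = Inf {enat n | n. (u, v) \<in> ck_arcs d l ^^ n}"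

definition ck_diameter :: "nat \<Rightarrow> nat \<Rightarrow> enat" where
  "ck_diameter d l = Sup {ck_dist d l u v | u v. u \<in> ck_vertices d l \<and> v \<in> ck_vertices d l}"

end

theory Submission
  imports Defs
begin

text \<open>A walk of length \<open>n\<close> in \<open>CK(d, l)\<close> is the same thing as a word of length \<open>l + n\<close> over
  \<open>{0..d}\<close> whose consecutive letters differ and whose letters at distance \<open>l - 1\<close> differ; its
  windows of length \<open>l\<close> are the vertices visited. For \<open>n = l - 1 + m\<close> the word reads
  \<open>u z\<^sub>0 \<dots> z\<^sub>m\<^sub>-\<^sub>2 v\<close>, and every middle letter \<open>z\<^sub>j\<close> has to avoid one letter of \<open>u\<close>, one letter of \<open>v\<close>
  and its neighbours.

  Upper bound: for \<open>d \<ge> 3\<close> every \<open>z\<^sub>j\<close> has at least two admissible letters, so colouring the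
  path \<open>z\<^sub>0 \<dots> z\<^sub>l\<^sub>-\<^sub>2\<close> from these lists gives a walk of length \<open>2l - 1\<close>; the only obstruction is a
  chain of two-letter lists passing the end conditions along the path, and that chain itself is the
  middle part of a walk of length \<open>2l - 2\<close>. For \<open>CK(3, 4)\<close> the same argument with at most two
  middle letters gives walks of length at most \<open>6\<close>.

  Lower bound: for explicit pairs of vertices every shorter word violates one of the constraints.
  In the hardest cases the middle letters are forced to alternate between two values, after which
  the last middle letter has no admissible value left.\<close>

(* The word spelled by a walk; the condition at distance l - 1 is x\<^sub>l \<noteq> x\<^sub>1 for every window. *)
definition ck_word :: "nat \<Rightarrow> nat \<Rightarrow> nat \<Rightarrow> (nat \<Rightarrow> nat) \<Rightarrow> bool" where
  "ck_word d l N f \<longleftrightarrow> (\<forall>i<N. f i \<le> d) \<and> (\<forall>i. Suc i < N \<longrightarrow> f i \<noteq> f (Suc i))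
     \<and> (\<forall>i. i + (l - 1) < N \<longrightarrow> f i \<noteq> f (i + (l - 1)))"

definition window :: "(nat \<Rightarrow> nat) \<Rightarrow> nat \<Rightarrow> nat \<Rightarrow> nat list" where
  "window f n l = map (\<lambda>i. f (n + i)) [0..<l]"

lemma length_window [simp]: "length (window f n l) = l"
  by (simp add: window_def)

lemma nth_window [simp]: "i < l \<Longrightarrow> window f n l ! i = f (n + i)"
  by (simp add: window_def)

lemma window_cong: "(\<And>i. i < l \<Longrightarrow> f (n + i) = g (n + i)) \<Longrightarrow> window f n l = window g n l"
  by (simp add: window_def)

lemma window_eq_iff: "window f n l = u \<longleftrightarrow> length u = l \<and> (\<forall>i<l. f (n + i) = u ! i)"
  by (auto simp: list_eq_iff_nth_eq)

lemma window_Suc: "0 < l \<Longrightarrow> window f (Suc n) l = tl (window f n l) @ [f (n + l)]"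
  by (rule nth_equalityI) (auto simp: nth_append nth_tl less_diff_conv intro!: arg_cong[where f = f])

lemma last_window: "0 < l \<Longrightarrow> last (window f n l) = f (n + (l - 1))"
  by (subst last_conv_nth) (auto simp: window_def)

lemma ck_word_le: "ck_word d l N f \<Longrightarrow> M \<le> N \<Longrightarrow> ck_word d l M f"
  unfolding ck_word_def by auto

lemma ck_wordD:
  assumes "ck_word d l N f"
  shows "i < N \<Longrightarrow> f i \<le> d" and "Suc i < N \<Longrightarrow> f i \<noteq> f (Suc i)"
    and "i + (l - 1) < N \<Longrightarrow> f i \<noteq> f (i + (l - 1))"
  using assms unfolding ck_word_def by blast+

lemma in_ck_vertices_iff:
  assumes "l \<ge> 1"
  shows "u \<in> ck_vertices d l \<longleftrightarrow> length u = l \<and> (\<forall>i<l. u ! i \<le> d)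
           \<and> (\<forall>i. Suc i < l \<longrightarrow> u ! i \<noteq> u ! Suc i) \<and> u ! 0 \<noteq> u ! (l - 1)"
proof -
  have "length u = l \<Longrightarrow> set u \<subseteq> {0..d} \<longleftrightarrow> (\<forall>i<l. u ! i \<le> d)"
    by (auto simp: set_conv_nth)
  moreover have "length u = l \<Longrightarrow> last u = hd u \<longleftrightarrow> u ! 0 = u ! (l - 1)"
    using assms by (subst hd_conv_nth last_conv_nth, force)+ auto
  ultimately show ?thesis
    unfolding ck_vertices_def by auto
qed

lemma ck_verticesD:
  assumes "u \<in> ck_vertices d l" "l \<ge> 1"
  shows "length u = l" "i < l \<Longrightarrow> u ! i \<le> d" "Suc i < l \<Longrightarrow> u ! i \<noteq> u ! Suc i"
    "u ! 0 \<noteq> u ! (l - 1)"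
  using assms by (simp_all add: in_ck_vertices_iff)

lemma ck_wordI_vertex:
  assumes "l \<ge> 3" "u \<in> ck_vertices d l"
  shows "ck_word d l l (\<lambda>i. u ! i)"
proof -
  have "l \<ge> 1" using assms(1) by simp
  note u = assms(2)[unfolded in_ck_vertices_iff[OF this]]
  have "u ! i \<noteq> u ! (i + (l - 1))" if "i + (l - 1) < l" for i
    using that u assms(1) by (cases i) auto
  then show ?thesis
    using u unfolding ck_word_def by auto
qed

lemma window_in_ck_vertices:
  assumes "l \<ge> 3" "ck_word d l N f" "n + l \<le> N"
  shows "window f n l \<in> ck_vertices d l"
proof -
  have "l \<ge> 1" using assms(1) by simp
  then show ?thesis
    using assms(2,3) unfolding in_ck_vertices_iff[OF \<open>l \<ge> 1\<close>] ck_word_def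
    by (auto simp: add.assoc)
qed

lemma ck_arc_window:
  assumes "l \<ge> 3" "ck_word d l (l + Suc n) f"
  shows "(window f n l, window f (Suc n) l) \<in> ck_arcs d l"
proof -
  have e: "Suc n + (l - 1) = n + l" "Suc (n + (l - 1)) = n + l"
    using assms(1) by simp_all
  have "f (n + l) \<le> d"
    using ck_wordD(1)[OF assms(2)] by simp
  moreover have "f (Suc n) \<noteq> f (n + l)"
    unfolding e(1)[symmetric] by (rule ck_wordD(3)[OF assms(2)]) (use assms(1) in simp)
  moreover have "f (n + (l - 1)) \<noteq> f (n + l)"
    unfolding e(2)[symmetric] by (rule ck_wordD(2)[OF assms(2)]) (use assms(1) in simp)
  moreover have "window f n l ! 1 = f (Suc n)" "last (window f n l) = f (n + (l - 1))"
    using assms(1) by (simp_all add: last_window)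
  moreover have "window f n l \<in> ck_vertices d l"
    using window_in_ck_vertices[OF assms] by simp
  moreover have "window f (Suc n) l = tl (window f n l) @ [f (n + l)]"
    using window_Suc assms(1) by simp
  ultimately show ?thesis
    unfolding ck_arcs_def by (intro CollectI exI[of _ "window f n l"] exI[of _ "f (n + l)"]) simp
qed

lemma relpow_ck_arcs_of_ck_word:
  assumes "l \<ge> 3" "ck_word d l (l + n) f"
  shows "(window f 0 l, window f n l) \<in> ck_arcs d l ^^ n"
  using assms(2)
proof (induction n)
  case (Suc n)
  then have "(window f 0 l, window f n l) \<in> ck_arcs d l ^^ n"
    using ck_word_le by fastforce
  with ck_arc_window[OF assms(1) Suc.prems] show ?case
    by auto
qed simp

lemma ck_word_snoc:
  assumes "l \<ge> 3" "ck_word d l (l + n) f" "(window f n l, v) \<in> ck_arcs d l"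
  obtains g where "ck_word d l (l + Suc n) g" "\<And>i. i < l + n \<Longrightarrow> g i = f i"
    "window g (Suc n) l = v"
proof -
  obtain y where y: "y \<le> d" "y \<noteq> window f n l ! 1" "y \<noteq> last (window f n l)"
    and v: "v = tl (window f n l) @ [y]"
    using assms(3) unfolding ck_arcs_def by auto
  have y': "y \<noteq> f (Suc n)" "y \<noteq> f (n + (l - 1))"
    using y assms(1) by (simp_all add: last_window)
  define g where "g = f(l + n := y)"
  have "ck_word d l (l + Suc n) g"
    unfolding ck_word_def
  proof (intro conjI allI impI)
    fix i assume "i < l + Suc n"
    then show "g i \<le> d"
      using ck_wordD(1)[OF assms(2), of i] y by (cases "i = l + n") (auto simp: g_def)
  next
    fix i assume i: "Suc i < l + Suc n"
    show "g i \<noteq> g (Suc i)"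
    proof (cases "Suc i = l + n")
      case True
      then have "i = n + (l - 1)" using assms(1) by simp
      then show ?thesis using True y' by (simp add: g_def)
    qed (use i ck_wordD(2)[OF assms(2), of i] in \<open>auto simp: g_def\<close>)
  next
    fix i assume i: "i + (l - 1) < l + Suc n"
    show "g i \<noteq> g (i + (l - 1))"
    proof (cases "i + (l - 1) = l + n")
      case True
      then have "i = Suc n" using assms(1) by simp
      then show ?thesis using True y' assms(1) by (simp add: g_def)
    qed (use i assms(1) ck_wordD(3)[OF assms(2), of i] in \<open>auto simp: g_def\<close>)
  qed
  moreover have "window g n l = window f n l"
    by (rule window_cong) (simp add: g_def)
  then have "window g (Suc n) l = v"
    using window_Suc[of l g n] assms(1) by (simp add: v g_def add.commute)
  ultimately show ?thesis
    using that g_def by simp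
qed

lemma ck_word_of_relpow_ck_arcs:
  assumes "l \<ge> 3" "u \<in> ck_vertices d l" "(u, v) \<in> ck_arcs d l ^^ n"
  shows "\<exists>f. ck_word d l (l + n) f \<and> window f 0 l = u \<and> window f n l = v"
  using assms(3)
proof (induction n arbitrary: v)
  case 0
  have "window (\<lambda>i. u ! i) 0 l = u"
    using assms(1,2) by (simp add: window_eq_iff in_ck_vertices_iff)
  with 0 ck_wordI_vertex[OF assms(1,2)] show ?case
    by auto
next
  case (Suc n)
  then obtain w where "(u, w) \<in> ck_arcs d l ^^ n" "(w, v) \<in> ck_arcs d l"
    by auto
  with Suc.IH obtain f where f: "ck_word d l (l + n) f" "window f 0 l = u" "(window f n l, v) \<in> ck_arcs d l"
    by blast
  obtain g where g: "ck_word d l (l + Suc n) g" "\<And>i. i < l + n \<Longrightarrow> g i = f i"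
    "window g (Suc n) l = v"
    using ck_word_snoc[OF assms(1) f(1,3)] by blast
  have "window g 0 l = u"
    unfolding f(2)[symmetric] by (rule window_cong) (simp add: g(2))
  with g(1,3) show ?case
    by blast
qed

definition bridge_word :: "nat \<Rightarrow> nat \<Rightarrow> nat list \<Rightarrow> (nat \<Rightarrow> nat) \<Rightarrow> nat list \<Rightarrow> nat \<Rightarrow> nat" where
  "bridge_word l m u z v i =
     (if i < l then u ! i else if i < l - 1 + m then z (i - l) else v ! (i - (l - 1 + m)))"

(* The constraints of ck_word on the word u z\<^sub>0 ... z\<^sub>m\<^sub>-\<^sub>2 v (see bridge_word) of a walk of length
   l - 1 + m that involve a middle letter z\<^sub>j or relate u to v. *)
definition ck_bridge :: "nat \<Rightarrow> nat \<Rightarrow> nat list \<Rightarrow> nat list \<Rightarrow> nat \<Rightarrow> (nat \<Rightarrow> nat) \<Rightarrow> bool" where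
  "ck_bridge d l u v m z \<longleftrightarrow>
     (\<forall>j. Suc j < m \<longrightarrow> z j \<le> d \<and> z j \<noteq> u ! Suc j \<and> z j \<noteq> v ! (l - m + j))
   \<and> (\<forall>j. Suc (Suc j) < m \<longrightarrow> z j \<noteq> z (Suc j))
   \<and> (if m = 1 then u ! (l - 1) \<noteq> v ! 0 else z 0 \<noteq> u ! (l - 1) \<and> z (m - 2) \<noteq> v ! 0)
   \<and> (\<forall>j. m \<le> j \<and> j < l \<longrightarrow> u ! j \<noteq> v ! (j - m))"

lemma bridge_word_left: "i < l \<Longrightarrow> bridge_word l m u z v i = u ! i"
  by (simp add: bridge_word_def)

lemma bridge_word_mid: "Suc j < m \<Longrightarrow> bridge_word l m u z v (l + j) = z j"
  by (auto simp: bridge_word_def)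

lemma bridge_word_right: "1 \<le> m \<Longrightarrow> bridge_word l m u z v (l - 1 + m + k) = v ! k"
  by (auto simp: bridge_word_def)

lemma ck_bridgeD:
  assumes "ck_bridge d l u v m z"
  shows "Suc j < m \<Longrightarrow> z j \<le> d" "Suc j < m \<Longrightarrow> z j \<noteq> u ! Suc j"
    "Suc j < m \<Longrightarrow> z j \<noteq> v ! (l - m + j)" "Suc (Suc j) < m \<Longrightarrow> z j \<noteq> z (Suc j)"
    "m = 1 \<Longrightarrow> u ! (l - 1) \<noteq> v ! 0" "m \<noteq> 1 \<Longrightarrow> z 0 \<noteq> u ! (l - 1)"
    "m \<noteq> 1 \<Longrightarrow> z (m - 2) \<noteq> v ! 0" "m \<le> j \<Longrightarrow> j < l \<Longrightarrow> u ! j \<noteq> v ! (j - m)"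
  using assms unfolding ck_bridge_def by auto

context
  fixes d l m :: nat and u v :: "nat list" and z :: "nat \<Rightarrow> nat"
  assumes l: "l \<ge> 1" and m: "1 \<le> m" "m \<le> l"
    and u: "u \<in> ck_vertices d l" and v: "v \<in> ck_vertices d l"
    and bridge: "ck_bridge d l u v m z"
begin

lemma bridge_word_index_cases:
  assumes "i < l + (l - 1 + m)"
  obtains (left) "i < l" | (mid) j where "i = l + j" "Suc j < m"
    | (right) k where "i = l - 1 + m + k" "k < l"
proof -
  consider "i < l" | "l \<le> i" "i < l - 1 + m" | "l - 1 + m \<le> i"
    by linarith
  then show thesis
  proof cases
    case 2
    then obtain j where "i = l + j" using le_Suc_ex by blast
    moreover from this have "Suc j < m" using 2 l by linarith
    ultimately show thesis using mid by blast
  next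
    case 3
    then obtain k where "i = l - 1 + m + k" using le_Suc_ex by blast
    moreover from this have "k < l" using assms by linarith
    ultimately show thesis using right by blast
  qed (use left in blast)
qed

lemma bridge_word_le: "i < l + (l - 1 + m) \<Longrightarrow> bridge_word l m u z v i \<le> d"
proof (induction rule: bridge_word_index_cases)
  case left
  then show ?case using bridge_word_left ck_verticesD(2)[OF u l] by simp
next
  case (mid j)
  then show ?case using bridge_word_mid ck_bridgeD(1)[OF bridge] by simp
next
  case (right k)
  then show ?case using bridge_word_right[OF m(1), of l u z v k] ck_verticesD(2)[OF v l] by simp
qed

lemma bridge_word_adjacent:
  assumes "Suc i < l + (l - 1 + m)"
  shows "bridge_word l m u z v i \<noteq> bridge_word l m u z v (Suc i)"
  using assms[THEN Suc_lessD]
proof (induction rule: bridge_word_index_cases)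
  case left
  show ?case
  proof (cases "Suc i < l")
    case True
    then show ?thesis using bridge_word_left ck_verticesD(3)[OF u l] by simp
  next
    case False
    then have "i = l - 1" "Suc i = l - 1 + m + 0 \<or> (Suc i = l + 0 \<and> Suc 0 < m)"
      using left m by auto
    then show ?thesis
      using bridge_word_left[of i] bridge_word_mid[of 0 m l u z v] bridge_word_right[OF m(1), of l u z v 0]
        ck_bridgeD(5,6)[OF bridge] left m by fastforce
  qed
next
  case (mid j)
  show ?case
  proof (cases "Suc (Suc j) < m")
    case True
    then show ?thesis using mid bridge_word_mid[of j m l u z v] bridge_word_mid[of "Suc j" m l u z v] ck_bridgeD(4)[OF bridge]
      by simp
  next
    case False
    then have "Suc i = l - 1 + m + 0" "j = m - 2" "m \<noteq> 1" using mid l by auto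
    then show ?thesis
      using mid bridge_word_mid[of j m l u z v] bridge_word_right[OF m(1), of l u z v 0] ck_bridgeD(7)[OF bridge]
      by simp
  qed
next
  case (right k)
  then have "Suc i = l - 1 + m + Suc k" "Suc k < l" using assms by auto
  then show ?case
    using right bridge_word_right[OF m(1), of l u z v k] bridge_word_right[OF m(1), of l u z v "Suc k"]
      ck_verticesD(3)[OF v l] by simp
qed

lemma bridge_word_window:
  assumes "i + (l - 1) < l + (l - 1 + m)"
  shows "bridge_word l m u z v i \<noteq> bridge_word l m u z v (i + (l - 1))"
proof -
  have "i < l + (l - 1 + m)" using assms l by linarith
  then show ?thesis
  proof (induction rule: bridge_word_index_cases)
    case left
    consider "i = 0" | j where "i = Suc j" "Suc j < m" | "m \<le> i"
      using not0_implies_Suc not_le by blast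
    then show ?case
    proof cases
      case 1
      then show ?thesis using bridge_word_left ck_verticesD(4)[OF u l] l by simp
    next
      case (2 j)
      then have "i + (l - 1) = l + j" using l by simp
      then have "bridge_word l m u z v (i + (l - 1)) = z j"
        using 2 by (simp only: bridge_word_mid)
      moreover have "bridge_word l m u z v i = u ! Suc j"
        using 2 left by (simp add: bridge_word_left)
      ultimately show ?thesis
        using ck_bridgeD(2)[OF bridge, of j] 2 by simp
    next
      case 3
      then have "i + (l - 1) = l - 1 + m + (i - m)" by simp
      then show ?thesis
        using 3 left bridge_word_left[of i] bridge_word_right[OF m(1), of l u z v "i - m"]
          ck_bridgeD(8)[OF bridge] by simp
    qed
  next
    case (mid j)
    then have "i + (l - 1) = l - 1 + m + (l - m + j)" using m by simp
    then have "bridge_word l m u z v (i + (l - 1)) = v ! (l - m + j)"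
      by (simp only: bridge_word_right[OF m(1)])
    moreover have "bridge_word l m u z v i = z j"
      using mid by (simp add: bridge_word_mid)
    ultimately show ?case
      using ck_bridgeD(3)[OF bridge, of j] mid by simp
  next
    case (right k)
    then have "i = l - 1 + m + 0" "i + (l - 1) = l - 1 + m + (l - 1)" using assms by auto
    then have "bridge_word l m u z v i = v ! 0" "bridge_word l m u z v (i + (l - 1)) = v ! (l - 1)"
      by (simp_all only: bridge_word_right[OF m(1)])
    then show ?case
      using ck_verticesD(4)[OF v l] by simp
  qed
qed

lemma ck_word_bridge_word: "ck_word d l (l + (l - 1 + m)) (bridge_word l m u z v)"
  unfolding ck_word_def using bridge_word_le bridge_word_adjacent bridge_word_window by blast

end

lemma ck_bridge_of_ck_word:
  assumes "l \<ge> 3" "1 \<le> m" "m \<le> l" "ck_word d l (l + (l - 1 + m)) f"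
    and "window f 0 l = u" "window f (l - 1 + m) l = v"
  shows "ck_bridge d l u v m (\<lambda>j. f (l + j))"
proof -
  have u: "i < l \<Longrightarrow> u ! i = f i" and v: "i < l \<Longrightarrow> v ! i = f (l - 1 + m + i)" for i
    using assms(5,6) by (auto simp: window_eq_iff)
  note f = ck_wordD[OF assms(4)]
  show ?thesis
    unfolding ck_bridge_def
  proof (intro conjI allI impI)
    fix j assume j: "Suc j < m"
    show "f (l + j) \<le> d"
      using f(1) j assms(3) by simp
    have "f (Suc j) \<noteq> f (Suc j + (l - 1))"
      by (rule f(3)) (use j assms(1,3) in simp)
    moreover have "Suc j + (l - 1) = l + j" using assms(1) by simp
    ultimately show "f (l + j) \<noteq> u ! Suc j"
      using u[of "Suc j"] j assms(3) by (simp add: add.commute)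
    have e: "l + j + (l - 1) = l - 1 + m + (l - m + j)" and lt: "l - m + j < l"
      using j assms(1,3) by simp_all
    have "f (l + j) \<noteq> f (l - 1 + m + (l - m + j))"
      unfolding e[symmetric] by (rule f(3)) (use j assms(1) in simp)
    then show "f (l + j) \<noteq> v ! (l - m + j)"
      by (simp only: v[OF lt] not_False_eq_True)
  next
    fix j assume "Suc (Suc j) < m"
    then show "f (l + j) \<noteq> f (l + Suc j)"
      using f(2)[of "l + j"] assms(3) by simp
  next
    fix j assume j: "m \<le> j \<and> j < l"
    have e: "j + (l - 1) = l - 1 + m + (j - m)" and lt: "j < l" "j - m < l"
      using j by auto
    have "f j \<noteq> f (l - 1 + m + (j - m))"
      unfolding e[symmetric] by (rule f(3)) (use j assms(1,2) in linarith)
    then show "u ! j \<noteq> v ! (j - m)"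
      by (simp only: u[OF lt(1)] v[OF lt(2)] not_False_eq_True)
  next
    have "f (l - 1) \<noteq> f (Suc (l - 1))"
      by (rule f(2)) (use assms(1) in linarith)
    moreover have "f (l + (m - 2)) \<noteq> f (Suc (l + (m - 2)))" if "m \<noteq> 1"
      by (rule f(2)) (use that assms(1,2,3) in linarith)
    moreover have "Suc (l - 1) = l" "m \<noteq> 1 \<Longrightarrow> Suc (l + (m - 2)) = l - 1 + m"
      using assms(1,2) by auto
    ultimately show "if m = 1 then u ! (l - 1) \<noteq> v ! 0
        else f (l + 0) \<noteq> u ! (l - 1) \<and> f (l + (m - 2)) \<noteq> v ! 0"
      using u[of "l - 1"] v[of 0] assms(1) by auto
  qed
qed

lemma relpow_ck_arcs_iff_ck_bridge:
  assumes "l \<ge> 3" "1 \<le> m" "m \<le> l" "u \<in> ck_vertices d l" "v \<in> ck_vertices d l"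
  shows "(u, v) \<in> ck_arcs d l ^^ (l - 1 + m) \<longleftrightarrow> (\<exists>z. ck_bridge d l u v m z)"
proof
  assume "(u, v) \<in> ck_arcs d l ^^ (l - 1 + m)"
  then show "\<exists>z. ck_bridge d l u v m z"
    using ck_word_of_relpow_ck_arcs[OF assms(1,4)] ck_bridge_of_ck_word[OF assms(1-3)] by blast
next
  assume "\<exists>z. ck_bridge d l u v m z"
  then obtain z where z: "ck_bridge d l u v m z" ..
  have "length u = l" "length v = l"
    using assms(4,5) by (simp_all add: ck_vertices_def)
  then have "window (bridge_word l m u z v) 0 l = u" "window (bridge_word l m u z v) (l - 1 + m) l = v"
    unfolding window_eq_iff bridge_word_right[OF assms(2)] by (simp_all add: bridge_word_left)
  moreover have "l \<ge> 1" using assms(1) by simp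
  ultimately show "(u, v) \<in> ck_arcs d l ^^ (l - 1 + m)"
    using relpow_ck_arcs_of_ck_word[OF assms(1) ck_word_bridge_word[OF _ assms(2-5) z]] by simp
qed

lemma relpow_ck_arcs_short:
  assumes "l \<ge> 3" "u \<in> ck_vertices d l" "(u, v) \<in> ck_arcs d l ^^ n" "n < l"
  shows "n + i < l \<Longrightarrow> v ! i = u ! (n + i)"
    and "j < n \<Longrightarrow> u ! j \<noteq> v ! (j + (l - 1) - n)"
proof -
  obtain f where f: "ck_word d l (l + n) f" "window f 0 l = u" "window f n l = v"
    using ck_word_of_relpow_ck_arcs[OF assms(1-3)] by blast
  have u: "i < l \<Longrightarrow> u ! i = f i" and v: "i < l \<Longrightarrow> v ! i = f (n + i)" for i
    using f(2,3) by (auto simp: window_eq_iff)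
  show "n + i < l \<Longrightarrow> v ! i = u ! (n + i)"
    using u v by simp
  assume "j < n"
  then have "j + (l - 1) = n + (j + (l - 1) - n)" "j + (l - 1) - n < l"
    using assms(4) by auto
  then show "u ! j \<noteq> v ! (j + (l - 1) - n)"
    using ck_wordD(3)[OF f(1), of j] u[of j] v \<open>j < n\<close> assms(4) by auto
qed

(* When all
   lists have two colours the only obstruction is a forcing chain c: the list A j is {c j, c (j + 1)},
   so the colour a at one end forces the colour b at the other. *)
definition path_colouring :: "(nat \<Rightarrow> 'a set) \<Rightarrow> nat \<Rightarrow> 'a \<Rightarrow> 'a \<Rightarrow> (nat \<Rightarrow> 'a) \<Rightarrow> bool" where
  "path_colouring A M a b z \<longleftrightarrow> (\<forall>j<M. z j \<in> A j) \<and> (\<forall>j. Suc j < M \<longrightarrow> z j \<noteq> z (Suc j))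
     \<and> z 0 \<noteq> a \<and> z (M - 1) \<noteq> b"

definition forcing_chain :: "(nat \<Rightarrow> 'a set) \<Rightarrow> nat \<Rightarrow> 'a \<Rightarrow> 'a \<Rightarrow> (nat \<Rightarrow> 'a) \<Rightarrow> bool" where
  "forcing_chain A M a b c \<longleftrightarrow> c 0 = a \<and> c M = b \<and> (\<forall>j<M. c j \<noteq> c (Suc j) \<and> A j = {c j, c (Suc j)})"

lemma path_colouring_Cons:
  assumes "x \<in> A 0" "x \<noteq> a" "path_colouring (\<lambda>j. A (Suc j)) M x b z" "0 < M"
  shows "path_colouring A (Suc M) a b (case_nat x z)"
  using assms unfolding path_colouring_def by (auto simp: less_Suc_eq_0_disj split: nat.split)

lemma forcing_chain_Cons:
  assumes "A 0 = {a, x}" "a \<noteq> x" "forcing_chain (\<lambda>j. A (Suc j)) M x b c"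
  shows "forcing_chain A (Suc M) a b (case_nat a c)"
  using assms unfolding forcing_chain_def by (auto simp: less_Suc_eq_0_disj)

lemma forcing_chain_start_unique:
  assumes "forcing_chain A M x b c" "forcing_chain A M y b c'"
  shows "x = y"
proof (rule ccontr)
  assume "x \<noteq> y"
  have "c j \<noteq> c' j" if "j \<le> M" for j
    using that
  proof (induction j)
    case 0
    then show ?case using assms \<open>x \<noteq> y\<close> by (simp add: forcing_chain_def)
  next
    case (Suc j)
    then have "{c j, c (Suc j)} = {c' j, c' (Suc j)}" "c j \<noteq> c (Suc j)" "c' j \<noteq> c' (Suc j)"
      using assms by (auto simp: forcing_chain_def)
    with Suc show ?case
      by (auto simp: doubleton_eq_iff)
  qed
  then have "c M \<noteq> c' M" by simp
  then show False
    using assms by (simp add: forcing_chain_def)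
qed

lemma path_colouring_or_forcing_chain_1:
  assumes "x \<in> A 0" "y \<in> A 0" "x \<noteq> y"
  shows "(\<exists>z. path_colouring A 1 a b z) \<or> (\<exists>c. forcing_chain A 1 a b c)"
proof (cases "\<exists>x\<in>A 0. x \<noteq> a \<and> x \<noteq> b")
  case True
  then obtain x where "x \<in> A 0" "x \<noteq> a" "x \<noteq> b" by blast
  then have "path_colouring A 1 a b (\<lambda>_. x)"
    unfolding path_colouring_def by simp
  then show ?thesis by blast
next
  case False
  then have "A 0 \<subseteq> {a, b}" by blast
  with assms have "A 0 = {a, b}" "a \<noteq> b" by auto
  then have "forcing_chain A 1 a b (\<lambda>j. if j = 0 then a else b)"
    by (simp add: forcing_chain_def)
  then show ?thesis by blast
qed

lemma path_colouring_or_forcing_chain: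
  assumes "0 < M" "\<forall>j<M. \<exists>x\<in>A j. \<exists>y\<in>A j. x \<noteq> y"
  shows "(\<exists>z. path_colouring A M a b z) \<or> (\<exists>c. forcing_chain A M a b c)"
  using assms
proof (induction M arbitrary: a A rule: nat_induct_non_zero)
  case 1
  then obtain x y where "x \<in> A 0" "y \<in> A 0" "x \<noteq> y" by blast
  then show ?case by (rule path_colouring_or_forcing_chain_1)
next
  case (Suc M)
  let ?A = "\<lambda>j. A (Suc j)"
  have "\<forall>j<M. \<exists>x\<in>?A j. \<exists>y\<in>?A j. x \<noteq> y"
    using Suc.prems by auto
  note tail = Suc.IH[OF this]
  obtain x0 y0 where xy: "x0 \<in> A 0" "y0 \<in> A 0" "x0 \<noteq> y0"
    using Suc.prems[rule_format, of 0] by blast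
  show ?case
  proof (cases "\<exists>x\<in>A 0. x \<noteq> a \<and> (\<exists>z. path_colouring ?A M x b z)")
    case True
    then obtain x z where "x \<in> A 0" "x \<noteq> a" "path_colouring ?A M x b z"
      by blast
    from path_colouring_Cons[OF this \<open>0 < M\<close>] show ?thesis
      by (intro disjI1 exI)
  next
    case False
    then have chain: "\<exists>c. forcing_chain ?A M x b c" if "x \<in> A 0" "x \<noteq> a" for x
      using tail[of x] that by blast
    obtain x where x: "x \<in> A 0" "x \<noteq> a"
      using xy by (cases "x0 = a") auto
    have "y = x" if "y \<in> A 0" "y \<noteq> a" for y
      using chain[OF x] chain[OF that] forcing_chain_start_unique by metis
    then have "A 0 \<subseteq> {a, x}"
      by blast
    moreover from this have "a \<in> A 0"
      using xy by auto
    ultimately have "A 0 = {a, x}"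
      using x(1) by blast
    moreover obtain c where "forcing_chain ?A M x b c"
      using chain[OF x] by blast
    ultimately have "forcing_chain A (Suc M) a b (case_nat a c)"
      by (rule forcing_chain_Cons[OF _ not_sym[OF x(2)]])
    then show ?thesis
      by (intro disjI2 exI)
  qed
qed

definition bridge_letters :: "nat \<Rightarrow> nat \<Rightarrow> nat list \<Rightarrow> nat list \<Rightarrow> nat \<Rightarrow> nat \<Rightarrow> nat set" where
  "bridge_letters d l u v m j = {x. x \<le> d \<and> x \<noteq> u ! Suc j \<and> x \<noteq> v ! (l - m + j)}"

lemma two_bridge_letters:
  "3 \<le> d \<Longrightarrow> \<exists>x\<in>bridge_letters d l u v m j. \<exists>y\<in>bridge_letters d l u v m j. x \<noteq> y"
  unfolding bridge_letters_def by simp presburger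

lemma ck_bridge_of_path_colouring:
  assumes "2 \<le> m" "\<forall>j. m \<le> j \<and> j < l \<longrightarrow> u ! j \<noteq> v ! (j - m)"
    and "path_colouring (bridge_letters d l u v m) (m - 1) (u ! (l - 1)) (v ! 0) z"
  shows "ck_bridge d l u v m z"
proof -
  have z: "\<And>j. j < m - 1 \<Longrightarrow> z j \<in> bridge_letters d l u v m j"
    "\<And>j. Suc j < m - 1 \<Longrightarrow> z j \<noteq> z (Suc j)" "z 0 \<noteq> u ! (l - 1)" "z (m - 1 - 1) \<noteq> v ! 0"
    using assms(3) unfolding path_colouring_def by auto
  have "m - 1 - 1 = m - 2" by simp
  then show ?thesis
    unfolding ck_bridge_def using z assms(1,2) by (auto simp: bridge_letters_def)
qed

(* The obstruction for a bridge of length m is, shifted by one, the middle part of a bridge of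
   length m - 1. *)
lemma ck_bridge_of_forcing_chain:
  assumes "3 \<le> m" "m \<le> l" "\<forall>j. m \<le> j \<and> j < l - 1 \<longrightarrow> u ! j \<noteq> v ! (j + 1 - m)"
    and "forcing_chain (bridge_letters d l u v m) (m - 1) (u ! (l - 1)) (v ! 0) c"
  shows "ck_bridge d l u v (m - 1) (\<lambda>j. c (Suc j))"
proof -
  have c: "c 0 = u ! (l - 1)" "c (m - 1) = v ! 0" "\<And>j. j < m - 1 \<Longrightarrow> c j \<noteq> c (Suc j)"
    "\<And>j. j < m - 1 \<Longrightarrow> c j \<in> bridge_letters d l u v m j \<and> c (Suc j) \<in> bridge_letters d l u v m j"
    using assms(4) unfolding forcing_chain_def by auto
  show ?thesis
    unfolding ck_bridge_def
  proof (intro conjI allI impI)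
    fix j assume j: "Suc j < m - 1"
    then have "c (Suc j) \<in> bridge_letters d l u v m j" "c (Suc j) \<in> bridge_letters d l u v m (Suc j)"
      using c(4)[of j] c(4)[of "Suc j"] by auto
    then have "c (Suc j) \<le> d" "c (Suc j) \<noteq> u ! Suc j" "c (Suc j) \<noteq> v ! (l - m + Suc j)"
      by (simp_all add: bridge_letters_def)
    moreover have "l - m + Suc j = l - (m - 1) + j" using j assms(2) by simp
    ultimately show "c (Suc j) \<le> d" "c (Suc j) \<noteq> u ! Suc j" "c (Suc j) \<noteq> v ! (l - (m - 1) + j)"
      by metis+
  next
    fix j assume "Suc (Suc j) < m - 1"
    then show "c (Suc j) \<noteq> c (Suc (Suc j))"
      using c(3)[of "Suc j"] by simp
  next
    have "Suc (m - 1 - 2) = m - 2" "Suc (m - 2) = m - 1" using assms(1) by auto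
    then show "if m - 1 = 1 then u ! (l - 1) \<noteq> v ! 0
        else c (Suc 0) \<noteq> u ! (l - 1) \<and> c (Suc (m - 1 - 2)) \<noteq> v ! 0"
      using c(1,2) c(3)[of 0] c(3)[of "m - 2"] assms(1) by auto
  next
    fix j assume j: "m - 1 \<le> j \<and> j < l"
    have "Suc (m - 2) = m - 1" "l - m + (m - 2) = l - 2" "m - 2 < m - 1" using assms(1,2) by auto
    then have "u ! (m - 1) \<noteq> v ! 0" "u ! (l - 1) \<noteq> v ! (l - m)"
      using c(2) c(4)[of "m - 2"] c(1) c(4)[of 0] assms(1) by (auto simp: bridge_letters_def)
    moreover have "l - 1 - (m - 1) = l - m" using assms(1) by simp
    ultimately show "u ! j \<noteq> v ! (j - (m - 1))"
    proof (cases "j = m - 1 \<or> j = l - 1")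
      case False
      then have "m \<le> j \<and> j < l - 1" using j by auto
      then have "u ! j \<noteq> v ! (j + 1 - m)" using assms(3) by blast
      moreover have "j + 1 - m = j - (m - 1)" using assms(1) by simp
      ultimately show ?thesis by metis
    qed auto
  qed
qed

lemma ck_walk_length_le:
  assumes "l \<ge> 3" "d \<ge> 3" "u \<in> ck_vertices d l" "v \<in> ck_vertices d l"
  shows "\<exists>n \<le> 2 * l - 1. (u, v) \<in> ck_arcs d l ^^ n"
proof -
  let ?A = "bridge_letters d l u v l"
  have "0 < l - 1" "\<forall>j<l - 1. \<exists>x\<in>?A j. \<exists>y\<in>?A j. x \<noteq> y"
    using assms(1) two_bridge_letters[OF assms(2)] by simp_all
  from path_colouring_or_forcing_chain[OF this, of "u ! (l - 1)" "v ! 0"]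
  obtain m z where m: "1 \<le> m" "m \<le> l" and z: "ck_bridge d l u v m z"
  proof (elim disjE exE)
    fix z assume "path_colouring ?A (l - 1) (u ! (l - 1)) (v ! 0) z"
    then have "ck_bridge d l u v l z"
      using ck_bridge_of_path_colouring[of l l u v d z] assms(1) by simp
    then show thesis
      by (rule that[rotated 2]) (use assms(1) in simp_all)
  next
    fix c assume "forcing_chain ?A (l - 1) (u ! (l - 1)) (v ! 0) c"
    moreover have "\<forall>j. l \<le> j \<and> j < l - 1 \<longrightarrow> u ! j \<noteq> v ! (j + 1 - l)"
      by auto
    ultimately have "ck_bridge d l u v (l - 1) (\<lambda>j. c (Suc j))"
      using ck_bridge_of_forcing_chain[of l l u v d c] assms(1) by simp
    then show thesis
      by (rule that[rotated 2]) (use assms(1) in simp_all)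
  qed
  then have "(u, v) \<in> ck_arcs d l ^^ (l - 1 + m)"
    using relpow_ck_arcs_iff_ck_bridge[OF assms(1) m assms(3,4)] z by blast
  with \<open>m \<le> l\<close> show ?thesis
    by (intro exI[of _ "l - 1 + m"]) simp
qed

lemma letter_avoiding_three: "\<exists>x::nat. x \<le> 3 \<and> x \<noteq> a \<and> x \<noteq> b \<and> x \<noteq> c"
  by presburger

lemma ck_walk_length_le_3_4:
  assumes "u \<in> ck_vertices 3 4" "v \<in> ck_vertices 3 4"
  shows "\<exists>n \<le> 6. (u, v) \<in> ck_arcs 3 4 ^^ n"
proof -
  have U: "u ! 2 \<noteq> u ! 3" and V: "v ! 0 \<noteq> v ! 1"
    using assms by (simp_all add: in_ck_vertices_iff numeral_eq_Suc)
  have j23: "2 \<le> j \<and> j < 4 \<longleftrightarrow> j = 2 \<or> j = (3::nat)" and j3: "3 \<le> j \<and> j < 4 \<longleftrightarrow> j = (3::nat)" for j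
    by auto
  obtain m z where m: "1 \<le> m" "m \<le> 3" and z: "ck_bridge 3 4 u v m z"
  proof (cases "u ! 3 = v ! 0")
    case True
    obtain x where "x \<le> 3" "x \<noteq> u ! 1" "x \<noteq> v ! 2" "x \<noteq> u ! 3"
      using letter_avoiding_three by blast
    then have "path_colouring (bridge_letters 3 4 u v 2) (2 - 1) (u ! (4 - 1)) (v ! 0) (\<lambda>_. x)"
      using True by (simp add: path_colouring_def bridge_letters_def)
    moreover have "\<forall>j. 2 \<le> j \<and> j < 4 \<longrightarrow> u ! j \<noteq> v ! (j - 2)"
      using True U V unfolding j23 by auto
    ultimately have "ck_bridge 3 4 u v 2 (\<lambda>_. x)"
      using ck_bridge_of_path_colouring[of 2 4 u v 3 "\<lambda>_. x"] by simp
    then show thesis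
      by (rule that[rotated 2]) simp_all
  next
    case False
    let ?A = "bridge_letters 3 4 u v 3"
    have "0 < (2::nat)" "\<forall>j<2. \<exists>x\<in>?A j. \<exists>y\<in>?A j. x \<noteq> y"
      using two_bridge_letters[of 3] by simp_all
    from path_colouring_or_forcing_chain[OF this, of "u ! 3" "v ! 0"] show thesis
    proof (elim disjE exE)
      fix z assume "path_colouring ?A 2 (u ! 3) (v ! 0) z"
      moreover have "\<forall>j. 3 \<le> j \<and> j < 4 \<longrightarrow> u ! j \<noteq> v ! (j - 3)"
        using False unfolding j3 by simp
      ultimately have "ck_bridge 3 4 u v 3 z"
        using ck_bridge_of_path_colouring[of 3 4 u v 3 z] by simp
      then show thesis
        by (rule that[rotated 2]) simp_all
    next
      fix c assume "forcing_chain ?A 2 (u ! 3) (v ! 0) c"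
      then have "ck_bridge 3 4 u v 2 (\<lambda>j. c (Suc j))"
        using ck_bridge_of_forcing_chain[of 3 4 u v 3 c] by simp
      then show thesis
        by (rule that[rotated 2]) simp_all
    qed
  qed
  have "(3::nat) \<le> 4" "m \<le> 4" using m by simp_all
  then have "(u, v) \<in> ck_arcs 3 4 ^^ (4 - 1 + m)"
    using relpow_ck_arcs_iff_ck_bridge[OF _ m(1) _ assms] z by blast
  with m show ?thesis
    by (intro exI[of _ "4 - 1 + m"]) simp
qed

lemma relpow_ck_arcs_cases [consumes 5, case_names short bridge]:
  assumes "l \<ge> 3" "u \<in> ck_vertices d l" "v \<in> ck_vertices d l"
    and "(u, v) \<in> ck_arcs d l ^^ n" "n < 2 * l - 1"
  obtains (short) "n < l" "\<And>i. n + i < l \<Longrightarrow> v ! i = u ! (n + i)"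
      "\<And>j. j < n \<Longrightarrow> u ! j \<noteq> v ! (j + (l - 1) - n)"
    | (bridge) m z where "1 \<le> m" "m \<le> l - 1" "n = l - 1 + m" "ck_bridge d l u v m z"
proof (cases "n < l")
  case True
  then show ?thesis
    using short relpow_ck_arcs_short[OF assms(1,2,4)] by blast
next
  case False
  define m where "m = n - (l - 1)"
  have m: "1 \<le> m" "m \<le> l - 1" "n = l - 1 + m"
    using False assms(5) unfolding m_def by auto
  then have "(u, v) \<in> ck_arcs d l ^^ (l - 1 + m)"
    using assms(4) by simp
  moreover have "m \<le> l" using m(2) by simp
  ultimately obtain z where "ck_bridge d l u v m z"
    using relpow_ck_arcs_iff_ck_bridge[OF assms(1) m(1) _ assms(2,3)] by blast
  with m show ?thesis
    using bridge by blast
qed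

lemma alternating_of_two_values:
  assumes "\<forall>j\<le>k. z j \<in> {a, b}" "\<forall>j<k. z j \<noteq> z (Suc j)" "z 0 = a" "j \<le> k"
  shows "z j = (if even j then a else b)"
  using assms(4)
proof (induction j)
  case (Suc j)
  then have "z (Suc j) \<in> {a, b}" "z j \<noteq> z (Suc j)"
    using assms(1,2) by auto
  with Suc show ?case
    by auto
qed (use assms(3) in simp)

definition ck_odd_source :: "nat \<Rightarrow> nat list" where
  "ck_odd_source l = map (\<lambda>i. if i = l - 1 then 2 else i mod 2) [0..<l]"

definition ck_odd_target :: "nat \<Rightarrow> nat list" where
  "ck_odd_target l = map (\<lambda>i. if i = 0 then 2 else i mod 2) [0..<l]"

lemma nth_ck_odd_source: "i < l \<Longrightarrow> ck_odd_source l ! i = (if i = l - 1 then 2 else i mod 2)"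
  by (simp add: ck_odd_source_def)

lemma nth_ck_odd_target: "i < l \<Longrightarrow> ck_odd_target l ! i = (if i = 0 then 2 else i mod 2)"
  by (simp add: ck_odd_target_def)

lemma ck_odd_source_target_in_ck_vertices:
  assumes "l \<ge> 3" "odd l" "d \<ge> 2"
  shows "ck_odd_source l \<in> ck_vertices d l" "ck_odd_target l \<in> ck_vertices d l"
proof -
  have "l \<ge> 1" using assms(1) by simp
  have "odd (l - 2)" using assms(1,2) by presburger
  then show "ck_odd_source l \<in> ck_vertices d l" "ck_odd_target l \<in> ck_vertices d l"
    using assms unfolding in_ck_vertices_iff[OF \<open>l \<ge> 1\<close>]
    by (auto simp: ck_odd_source_def ck_odd_target_def mod_Suc odd_iff_mod_2_eq_one)
qed

(* The middle letters avoid 0 and 1, so they alternate 3, 2, 3, ...; the last one then clashes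
   with the leading 2 of the target. *)
lemma ck_odd_no_odd_bridge:
  assumes "odd l" "odd m" "3 \<le> m" "m \<le> l - 2"
  shows "\<not> ck_bridge 3 l (ck_odd_source l) (ck_odd_target l) m z"
proof
  let ?s = "ck_odd_source l" and ?t = "ck_odd_target l"
  assume "ck_bridge 3 l ?s ?t m z"
  note Z = ck_bridgeD[OF this] and st = nth_ck_odd_source nth_ck_odd_target
  have "odd (m - 2)" "even (l - m)" using assms by presburger+
  have two: "z j \<in> {3, 2}" if "j \<le> m - 2" for j
  proof -
    have j: "Suc j < m" using that assms(3) by simp
    obtain k where "l - m = 2 * k"
      using \<open>even (l - m)\<close> by (elim evenE)
    then have "(l - m + j) mod 2 = j mod 2"
      by simp
    then have "?s ! Suc j = Suc j mod 2" "?t ! (l - m + j) = j mod 2"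
      using j assms(4) by (simp_all add: st)
    then have "z j \<le> 3" "z j \<noteq> Suc j mod 2" "z j \<noteq> j mod 2"
      using Z(1-3)[OF j] by auto
    then show ?thesis
      by (auto simp: mod_Suc split: if_splits)
  qed
  have "z 0 \<noteq> 2" using Z(6) assms(3,4) by (simp add: st)
  then have "z 0 = 3" using two[of 0] by simp
  moreover have "\<forall>j<m - 2. z j \<noteq> z (Suc j)"
    using Z(4) by simp
  ultimately have "z (m - 2) = 2"
    using alternating_of_two_values[of "m - 2" z 3 2 "m - 2"] two \<open>odd (m - 2)\<close> by simp
  moreover have "z (m - 2) \<noteq> 2" using Z(7) assms(3,4) by (simp add: st)
  ultimately show False by simp
qed

lemma ck_odd_no_bridge:
  assumes "l \<ge> 3" "odd l" "d = 3 \<or> l = 3" "1 \<le> m" "m \<le> l - 1"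
  shows "\<not> ck_bridge d l (ck_odd_source l) (ck_odd_target l) m z"
proof
  let ?s = "ck_odd_source l" and ?t = "ck_odd_target l"
  assume bridge: "ck_bridge d l ?s ?t m z"
  note Z = ck_bridgeD[OF this] and st = nth_ck_odd_source nth_ck_odd_target
  have "m = 1 \<or> (even m \<and> m + 1 < l) \<or> m = l - 1 \<or> (odd m \<and> 3 \<le> m \<and> m \<le> l - 2)"
    using assms by presburger
  then consider "m = 1" | "even m" "m + 1 < l" | "m = l - 1" | "odd m" "3 \<le> m" "m \<le> l - 2"
    by blast
  then show False
  proof cases
    case 1
    then show False
      using Z(5) assms(1) by (simp add: st)
  next
    case 2
    then have "Suc m mod 2 = 1" "Suc m \<noteq> l - 1" using assms(2) by presburger+
    then show False
      using Z(8)[of "Suc m"] 2 by (simp add: st)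
  next
    case 3
    then show False
      using Z(8)[of "l - 1"] assms(1) by (simp add: st)
  next
    case 4
    then have "d = 3" using assms(3) by auto
    then show False
      using ck_odd_no_odd_bridge[OF assms(2) 4] bridge by simp
  qed
qed

lemma ck_odd_far:
  assumes "l \<ge> 3" "odd l" "d \<ge> 3" "d = 3 \<or> l = 3" "n < 2 * l - 1"
  shows "(ck_odd_source l, ck_odd_target l) \<notin> ck_arcs d l ^^ n"
proof
  let ?s = "ck_odd_source l" and ?t = "ck_odd_target l"
  note st = nth_ck_odd_source nth_ck_odd_target
  assume walk: "(?s, ?t) \<in> ck_arcs d l ^^ n"
  have "d \<ge> 2" using assms(3) by simp
  note V = ck_odd_source_target_in_ck_vertices[OF assms(1,2) this]
  from assms(1) V walk assms(5) show False
  proof (cases rule: relpow_ck_arcs_cases)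
    case short
    show False
    proof (cases "n = l - 1")
      case True
      then have "1 < n" using assms(1) by simp
      with short(3)[of 1] True assms(1) show False
        by (simp add: st)
    next
      case False
      then have "?t ! 0 = ?s ! n"
        using short(1) short(2)[of 0] by simp
      then show False
        using short(1) False by (simp add: st)
    qed
  next
    case (bridge m z)
    then show False
      using ck_odd_no_bridge[OF assms(1,2,4)] by blast
  qed
qed

definition ck_even_source :: "nat \<Rightarrow> nat list" where
  "ck_even_source l = map (\<lambda>i. if i = 0 \<or> i = l - 2 then 0 else if i = l - 1 then 2
     else if odd i then 1 else 2) [0..<l]"

definition ck_even_target :: "nat \<Rightarrow> nat list" where
  "ck_even_target l = map (\<lambda>i. if i = 0 then 2 else if i = 1 \<or> i = l - 2 then 0 else if i = 2 then 3
     else if i = l - 1 then 1 else if odd i then 1 else 2) [0..<l]"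

lemma nth_ck_even_source:
  "i < l \<Longrightarrow> ck_even_source l ! i =
     (if i = 0 \<or> i = l - 2 then 0 else if i = l - 1 then 2 else if odd i then 1 else 2)"
  by (simp add: ck_even_source_def)

lemma nth_ck_even_target:
  "i < l \<Longrightarrow> ck_even_target l ! i = (if i = 0 then 2 else if i = 1 \<or> i = l - 2 then 0
     else if i = 2 then 3 else if i = l - 1 then 1 else if odd i then 1 else 2)"
  by (simp add: ck_even_target_def)

lemma nth_ck_even_source_mid:
  "1 \<le> i \<Longrightarrow> i + 3 \<le> l \<Longrightarrow> ck_even_source l ! i = (if odd i then 1 else 2)"
  by (auto simp: nth_ck_even_source)

lemma nth_ck_even_target_mid:
  "3 \<le> i \<Longrightarrow> i + 3 \<le> l \<Longrightarrow> ck_even_target l ! i = (if odd i then 1 else 2)"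
  by (auto simp: nth_ck_even_target)

lemma ck_even_source_ends:
  "l \<ge> 6 \<Longrightarrow> ck_even_source l ! 0 = 0 \<and> ck_even_source l ! 1 = 1
     \<and> ck_even_source l ! (l - 2) = 0 \<and> ck_even_source l ! (l - 1) = 2"
  by (auto simp: nth_ck_even_source)

lemma ck_even_target_ends:
  "l \<ge> 6 \<Longrightarrow> ck_even_target l ! 0 = 2 \<and> ck_even_target l ! 1 = 0 \<and> ck_even_target l ! 2 = 3
     \<and> ck_even_target l ! (l - 2) = 0 \<and> ck_even_target l ! (l - 1) = 1"
  by (auto simp: nth_ck_even_target)

lemma ck_even_source_in_ck_vertices:
  assumes "l \<ge> 6" "even l" "d \<ge> 3"
  shows "ck_even_source l \<in> ck_vertices d l"
proof -
  let ?s = "ck_even_source l"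
  have "l \<ge> 1" "odd (l - 3)" using assms(1,2) by presburger+
  have "?s ! i \<noteq> ?s ! Suc i" if i: "Suc i < l" for i
  proof -
    consider "i = 0" | "1 \<le> i" "Suc i + 3 \<le> l" | "i = l - 3" | "i = l - 2"
      using i by linarith
    then show ?thesis
    proof cases
      case 2
      then show ?thesis by (simp add: nth_ck_even_source_mid)
    next
      case 3
      then have "Suc i = l - 2" using assms(1) by simp
      then show ?thesis
        using 3 \<open>odd (l - 3)\<close> assms(1) by (auto simp: nth_ck_even_source)
    qed (use assms(1) in \<open>auto simp: nth_ck_even_source\<close>)
  qed
  then show ?thesis
    unfolding in_ck_vertices_iff[OF \<open>l \<ge> 1\<close>] using assms(1,3)
    by (simp add: nth_ck_even_source ck_even_source_def)
qed

lemma ck_even_target_in_ck_vertices: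
  assumes "l \<ge> 6" "even l" "d \<ge> 3"
  shows "ck_even_target l \<in> ck_vertices d l"
proof -
  let ?t = "ck_even_target l"
  have "l \<ge> 1" "odd (l - 3)" using assms(1,2) by presburger+
  have "?t ! i \<noteq> ?t ! Suc i" if i: "Suc i < l" for i
  proof -
    consider "i \<le> 2" | "3 \<le> i" "Suc i + 3 \<le> l" | "i = l - 3" | "i = l - 2"
      using i by linarith
    then show ?thesis
    proof cases
      case 1
      then show ?thesis using assms(1) by (auto simp: nth_ck_even_target le_Suc_eq)
    next
      case 2
      then show ?thesis by (simp add: nth_ck_even_target_mid)
    next
      case 3
      then have "Suc i = l - 2" using assms(1) by simp
      then show ?thesis
        using 3 \<open>odd (l - 3)\<close> assms(1) by (auto simp: nth_ck_even_target)
    qed (use assms(1) in \<open>auto simp: nth_ck_even_target\<close>)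
  qed
  then show ?thesis
    unfolding in_ck_vertices_iff[OF \<open>l \<ge> 1\<close>] using assms(1,3)
    by (simp add: nth_ck_even_target ck_even_target_def)
qed

(* The middle letters z\<^sub>1, ..., z\<^sub>l\<^sub>-\<^sub>5 avoid one letter 1 and one letter 2, so together with z\<^sub>0 = 0
   they alternate 0, 3, 0, ...; then z\<^sub>l\<^sub>-\<^sub>4 has no admissible letter left. *)
lemma ck_even_no_bridge_l_minus_2:
  assumes "l \<ge> 6" "even l"
  shows "\<not> ck_bridge 3 l (ck_even_source l) (ck_even_target l) (l - 2) z"
proof
  let ?s = "ck_even_source l" and ?t = "ck_even_target l"
  assume "ck_bridge 3 l ?s ?t (l - 2) z"
  note Z = ck_bridgeD[OF this] and ends = ck_even_source_ends[OF assms(1)] ck_even_target_ends[OF assms(1)]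
  have "odd (l - 5)" "odd (l - 3)" using assms by presburger+
  have "z j \<in> {0, 3}" if "j \<le> l - 5" for j
  proof -
    have j: "Suc j < l - 2" and "l - (l - 2) + j = Suc (Suc j)" using that assms(1) by auto
    then have "z j \<le> 3" "z j \<noteq> ?s ! Suc j" "z j \<noteq> ?t ! Suc (Suc j)"
      using Z(1-3)[OF j] by auto
    moreover have "z j \<noteq> 2" if "j = 0"
      using Z(6) that assms(1) ends by simp
    moreover have "{?s ! Suc j, ?t ! Suc (Suc j)} = {1, 2}" if "j \<noteq> 0"
      using that \<open>j \<le> l - 5\<close> assms(1)
      by (cases "odd j") (simp_all add: nth_ck_even_source_mid nth_ck_even_target_mid insert_commute)
    ultimately show ?thesis
      using ends by (cases "j = 0") (auto simp: numeral_2_eq_2 doubleton_eq_iff)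
  qed
  moreover have "z 0 = 0"
    using calculation[of 0] Z(3)[of 0] assms(1) ends by auto
  moreover have "\<forall>j<l - 5. z j \<noteq> z (Suc j)"
    using Z(4) by simp
  ultimately have "z (l - 5) = 3"
    using alternating_of_two_values[of "l - 5" z 0 3 "l - 5"] \<open>odd (l - 5)\<close> by simp
  moreover have "Suc (l - 5) = l - 4" "l - (l - 2) + (l - 4) = l - 2" "Suc (l - 4) = l - 3"
    using assms(1) by auto
  then have "z (l - 5) \<noteq> z (l - 4)" "z (l - 4) \<le> 3" "z (l - 4) \<noteq> ?s ! (l - 3)"
    "z (l - 4) \<noteq> ?t ! (l - 2)" "z (l - 4) \<noteq> ?t ! 0"
    using Z(1-3)[of "l - 4"] Z(4)[of "l - 5"] Z(7) assms(1) by auto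
  ultimately show False
    using \<open>odd (l - 3)\<close> assms(1) ends by (auto simp: nth_ck_even_source_mid)
qed

lemma ck_even_no_bridge:
  assumes "l \<ge> 6" "even l" "1 \<le> m" "m \<le> l - 1"
  shows "\<not> ck_bridge 3 l (ck_even_source l) (ck_even_target l) m z"
proof
  let ?s = "ck_even_source l" and ?t = "ck_even_target l"
  assume bridge: "ck_bridge 3 l ?s ?t m z"
  note Z = ck_bridgeD[OF this] and ends = ck_even_source_ends[OF assms(1)] ck_even_target_ends[OF assms(1)]
  have "m = 1 \<or> m = l - 1 \<or> (even m \<and> 2 \<le> m \<and> m + 4 \<le> l) \<or> (odd m \<and> 3 \<le> m \<and> m + 5 \<le> l)
      \<or> m = l - 3 \<or> m = l - 2"
    using assms by presburger
  then consider "m = 1" | "m = l - 1" | "even m" "2 \<le> m" "m + 4 \<le> l"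
    | "odd m" "3 \<le> m" "m + 5 \<le> l" | "m = l - 3" | "m = l - 2"
    by blast
  then show False
  proof cases
    case 1
    then show False using Z(5) ends by simp
  next
    case 2
    then show False using Z(8)[of "l - 1"] ends assms(1) by simp
  next
    case 3
    then show False using Z(8)[of m] ends by (simp add: nth_ck_even_source_mid)
  next
    case 4
    then have "even (l - 1 - m)" "3 \<le> l - 1 - m" "l - 1 - m + 3 \<le> l" using assms(2) by presburger+
    then show False using Z(8)[of "l - 1"] ends 4 by (simp add: nth_ck_even_target_mid)
  next
    case 5
    then have "m \<le> l - 2" "l - 2 < l" "l - 2 - m = 1" using assms(1) by auto
    then show False using Z(8)[of "l - 2"] ends by simp
  next
    case 6
    then show False using ck_even_no_bridge_l_minus_2[OF assms(1,2)] bridge by simp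
  qed
qed

lemma ck_even_far:
  assumes "l \<ge> 6" "even l" "n < 2 * l - 1"
  shows "(ck_even_source l, ck_even_target l) \<notin> ck_arcs 3 l ^^ n"
proof
  let ?s = "ck_even_source l" and ?t = "ck_even_target l"
  note ends = ck_even_source_ends[OF assms(1)] ck_even_target_ends[OF assms(1)]
  assume walk: "(?s, ?t) \<in> ck_arcs 3 l ^^ n"
  have "l \<ge> 3" "(3::nat) \<ge> 3" using assms(1) by simp_all
  note V = ck_even_source_in_ck_vertices[OF assms(1,2) this(2)]
    ck_even_target_in_ck_vertices[OF assms(1,2) this(2)]
  from \<open>l \<ge> 3\<close> V walk assms(3) show False
  proof (cases rule: relpow_ck_arcs_cases)
    case short
    show False
    proof (cases "n = l - 1")
      case True
      then have "l - 2 < n" "l - 2 + (l - 1) - n = l - 2" using assms(1) by auto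
      then show False
        using short(3)[of "l - 2"] ends by simp
    next
      case False
      then have "?s ! n = 2" "?s ! Suc n = 0"
        using short(1) short(2)[of 0] short(2)[of 1] ends by simp_all
      moreover have "even (l - 2)" using assms(2) by simp
      ultimately show False
        using short(1) False by (auto simp: nth_ck_even_source split: if_splits; presburger)
    qed
  next
    case (bridge m z)
    then show False
      using ck_even_no_bridge[OF assms(1,2)] by blast
  qed
qed

lemma ck_3_4_witnesses_in_ck_vertices:
  "[0, 1, 2, 1] \<in> ck_vertices 3 4" "[2, 0, 1, 0] \<in> ck_vertices 3 4"
  by (simp_all add: in_ck_vertices_iff numeral_eq_Suc less_Suc_eq)

lemma ck_3_4_far:
  assumes "n < 6"
  shows "([0, 1, 2, 1], [2, 0, 1, 0]) \<notin> ck_arcs 3 4 ^^ n"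
proof
  let ?s = "[0, 1, 2, 1] :: nat list" and ?t = "[2, 0, 1, 0] :: nat list"
  assume walk: "(?s, ?t) \<in> ck_arcs 3 4 ^^ n"
  have "(3::nat) \<le> 4" "n < 2 * 4 - 1"
    using assms by simp_all
  from this(1) ck_3_4_witnesses_in_ck_vertices walk this(2) show False
  proof (cases rule: relpow_ck_arcs_cases)
    case short
    then have "n = 0 \<or> n = 1 \<or> n = 2 \<or> n = 3" by auto
    then show False
      using short(2)[of 0] short(2)[of 1] by auto
  next
    case (bridge m z)
    then have "m = 1 \<or> m = 2" using assms by auto
    then show False
      using ck_bridgeD(8)[OF bridge(4), of 3] ck_bridgeD(8)[OF bridge(4), of 2] by auto
  qed
qed

lemma ck_dist_le: "(u, v) \<in> ck_arcs d l ^^ n \<Longrightarrow> ck_dist d l u v \<le> enat n"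
  unfolding ck_dist_def by (rule Inf_lower) blast

lemma ck_dist_ge: "(\<And>n. n < N \<Longrightarrow> (u, v) \<notin> ck_arcs d l ^^ n) \<Longrightarrow> enat N \<le> ck_dist d l u v"
  unfolding ck_dist_def by (rule Inf_greatest) (auto simp: not_less[symmetric])

lemma ck_diameter_eqI:
  assumes "\<And>u v. u \<in> ck_vertices d l \<Longrightarrow> v \<in> ck_vertices d l \<Longrightarrow> \<exists>n\<le>D. (u, v) \<in> ck_arcs d l ^^ n"
    and "u0 \<in> ck_vertices d l" "v0 \<in> ck_vertices d l" "\<And>n. n < D \<Longrightarrow> (u0, v0) \<notin> ck_arcs d l ^^ n"
  shows "ck_diameter d l = enat D"
proof (rule antisym)
  show "ck_diameter d l \<le> enat D"
    unfolding ck_diameter_def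
  proof (rule Sup_least, clarify)
    fix u v assume "u \<in> ck_vertices d l" "v \<in> ck_vertices d l"
    then obtain n where "n \<le> D" "(u, v) \<in> ck_arcs d l ^^ n"
      using assms(1) by blast
    then have "ck_dist d l u v \<le> enat n" "enat n \<le> enat D"
      using ck_dist_le by simp_all
    then show "ck_dist d l u v \<le> enat D"
      by (rule order_trans)
  qed
  have "enat D \<le> ck_dist d l u0 v0"
    using ck_dist_ge assms(4) by blast
  also have "\<dots> \<le> ck_diameter d l"
    unfolding ck_diameter_def by (rule Sup_upper) (use assms(2,3) in blast)
  finally show "enat D \<le> ck_diameter d l" .
qed

lemma ck_diameter_odd:
  assumes "l \<ge> 3" "odd l" "d \<ge> 3" "d = 3 \<or> l = 3"
  shows "ck_diameter d l = enat (2 * l - 1)"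
proof (rule ck_diameter_eqI)
  show "\<exists>n\<le>2 * l - 1. (u, v) \<in> ck_arcs d l ^^ n" if "u \<in> ck_vertices d l" "v \<in> ck_vertices d l" for u v
    using ck_walk_length_le[OF assms(1,3) that] .
  show "ck_odd_source l \<in> ck_vertices d l" "ck_odd_target l \<in> ck_vertices d l"
    using ck_odd_source_target_in_ck_vertices assms(1-3) by simp_all
  show "(ck_odd_source l, ck_odd_target l) \<notin> ck_arcs d l ^^ n" if "n < 2 * l - 1" for n
    using ck_odd_far[OF assms that] .
qed

lemma ck_diameter_3_even:
  assumes "l \<ge> 6" "even l"
  shows "ck_diameter 3 l = enat (2 * l - 1)"
proof (rule ck_diameter_eqI)
  show "\<exists>n\<le>2 * l - 1. (u, v) \<in> ck_arcs 3 l ^^ n" if "u \<in> ck_vertices 3 l" "v \<in> ck_vertices 3 l" for u v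
    using ck_walk_length_le[OF _ _ that] assms(1) by simp
  show "ck_even_source l \<in> ck_vertices 3 l" "ck_even_target l \<in> ck_vertices 3 l"
    using ck_even_source_in_ck_vertices ck_even_target_in_ck_vertices assms by simp_all
  show "(ck_even_source l, ck_even_target l) \<notin> ck_arcs 3 l ^^ n" if "n < 2 * l - 1" for n
    using ck_even_far[OF assms that] .
qed

lemma ck_diameter_3_4: "ck_diameter 3 4 = enat 6"
  by (rule ck_diameter_eqI[OF ck_walk_length_le_3_4 ck_3_4_witnesses_in_ck_vertices ck_3_4_far])

theorem proposition1:
  shows "(\<forall>l::nat. l \<ge> 3 \<and> l \<noteq> 4 \<longrightarrow> ck_diameter 3 l = enat (2 * l - 1))
       \<and> (\<forall>d::nat. d \<ge> 3 \<longrightarrow> ck_diameter d 3 = enat 5)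
       \<and> ck_diameter 3 4 = enat 6"
proof (intro conjI allI impI)
  fix l :: nat assume l: "l \<ge> 3 \<and> l \<noteq> 4"
  show "ck_diameter 3 l = enat (2 * l - 1)"
  proof (cases "odd l")
    case True
    then show ?thesis using ck_diameter_odd l by simp
  next
    case False
    then have "l \<ge> 6" using l by presburger
    with False show ?thesis using ck_diameter_3_even by simp
  qed
next
  fix d :: nat assume "d \<ge> 3"
  then show "ck_diameter d 3 = enat 5"
    using ck_diameter_odd[of 3 d] by simp
qed (rule ck_diameter_3_4)

end
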